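(* Let $k, q \in \mathbb N$ with $k \ge 2$, and let $\phi \colon \mathcal H_{2k}^0 \to M_{2q}$ be a real linear map such that $\phi(\mathcal{IH}_{2k}^0) \subset \mathcal U_{2q}$ and there exist $U, V \in \mathcal U_{2q}$ with $$\phi(A \oplus B) = U(B \otimes I_q)V \quad \text{for all } A \in \mathcal H_{2(k-1)}^0,\ B \in \mathcal H_2^0.$$ Then there exists a real linear map $\psi \colon M_{2(k-1)} \to \mathcal H_q$ such that $\psi(\mathcal U_{2(k-1)}) \subset \mathcal H_q\cap\mathcal U_q$.
   Context: $M_n$ is the set of $n\times n$ complex matrices, $\mathcal U_n$ the unitary ones, $\mathcal H_n$ the hermitian ones, $\mathcal H_n^0$ the trace-zero hermitian ones, $\mathcal{IH}_n^0=\mathcal H_n^0\cap\mathcal U_n$; $\oplus$ is block-diagonal sum and $\otimes$ the Kronecker product. *)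

theory Defs
  imports Complex_Main "Jordan_Normal_Form.Matrix"
begin

definition adj :: "complex mat \<Rightarrow> complex mat" where
  "adj A = mat (dim_col A) (dim_row A) (\<lambda>(i,j). cnj (A $$ (j,i)))"

definition mtrace :: "complex mat \<Rightarrow> complex" where
  "mtrace A = (\<Sum>i<dim_row A. A $$ (i,i))"

abbreviation Mn :: "nat \<Rightarrow> complex mat set" where
  "Mn n \<equiv> carrier_mat n n"

definition Unit :: "nat \<Rightarrow> complex mat set" where
  "Unit n = {U \<in> carrier_mat n n. adj U * U = 1\<^sub>m n}"

definition Herm :: "nat \<Rightarrow> complex mat set" where
  "Herm n = {A \<in> carrier_mat n n. adj A = A}"

definition Herm0 :: "nat \<Rightarrow> complex mat set" where
  "Herm0 n = {A \<in> Herm n. mtrace A = 0}"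

definition IHerm0 :: "nat \<Rightarrow> complex mat set" where
  "IHerm0 n = Herm0 n \<inter> Unit n"

definition dsum :: "complex mat \<Rightarrow> complex mat \<Rightarrow> complex mat" where
  "dsum A B = four_block_mat A (0\<^sub>m (dim_row A) (dim_col B)) (0\<^sub>m (dim_row B) (dim_col A)) B"

definition kron :: "complex mat \<Rightarrow> complex mat \<Rightarrow> complex mat" where
  "kron A B = mat (dim_row A * dim_row B) (dim_col A * dim_col B)
     (\<lambda>(i,j). A $$ (i div dim_row B, j div dim_col B) * B $$ (i mod dim_row B, j mod dim_col B))"

definition real_linear_on :: "complex mat set \<Rightarrow> (complex mat \<Rightarrow> complex mat) \<Rightarrow> bool" where
  "real_linear_on S f \<longleftrightarrow> (\<forall>X\<in>S. \<forall>Y\<in>S. \<forall>a b :: real.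
      f (complex_of_real a \<cdot>\<^sub>m X + complex_of_real b \<cdot>\<^sub>m Y)
        = complex_of_real a \<cdot>\<^sub>m f X + complex_of_real b \<cdot>\<^sub>m f Y)"

end

(*
  Write n = 2(k - 1) and embed W \<in> M_n into H^0_{n+2} through the Hermitian dilation
  Y(W) = [[0, W E], [(W E)^*, 0]], where E = [I_2; 0]; put N(W) = U^* \<phi>(Y(W)) V^*.
  For unitary W, Y(W) differs from the Hermitian unitary X_W = (W \<oplus> I_2) X_0 (W \<oplus> I_2)^*,
  where X_0 = [[D, E], [E^*, 0]] with D a reflection of the complement of the range of E, only
  by a block A \<oplus> 0, which \<phi> sends to U (0 \<otimes> I_q) V = 0; so N(W) is unitary.
  For every B \<in> IH^0_2 some Hermitian unitary H_W = A' \<oplus> B anticommutes with X_W. Then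
  (H_W + X_W)/\<surd>2 is again a Hermitian unitary, and unitarity of its image forces
  (B \<otimes> I_q) N(W) + N(W)^* (B \<otimes> I_q) = 0. Letting B run through the Pauli matrices shows
  that the leading q \<times> q block of N(W) is skew-Hermitian and unitary, so i times it is a
  Hermitian unitary; \<psi>(W) is the Hermitian part of that matrix, which keeps \<psi> real linear
  and Hermitian-valued on all of M_n.
*)

theory Submission
  imports Defs "Jordan_Normal_Form.Determinant"
begin

lemma dim_adj [simp]: "dim_row (adj A) = dim_col A" "dim_col (adj A) = dim_row A"
  unfolding adj_def by simp_all

lemma index_adj [simp]: "i < dim_col A \<Longrightarrow> j < dim_row A \<Longrightarrow> adj A $$ (i,j) = cnj (A $$ (j,i))"
  unfolding adj_def by simp

lemma adj_carrier_mat [simp]: "A \<in> carrier_mat nr nc \<Longrightarrow> adj A \<in> carrier_mat nc nr"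
  unfolding carrier_mat_def by simp

lemma adj_adj [simp]: "adj (adj A) = A"
  by (rule eq_matI) auto

lemma adj_mult: "A \<in> carrier_mat nr n \<Longrightarrow> B \<in> carrier_mat n nc \<Longrightarrow> adj (A * B) = adj B * adj A"
  by (rule eq_matI) (auto simp: scalar_prod_def intro!: sum.cong)

lemma adj_add: "A \<in> carrier_mat nr nc \<Longrightarrow> B \<in> carrier_mat nr nc \<Longrightarrow> adj (A + B) = adj A + adj B"
  by (rule eq_matI) auto

lemma adj_smult: "adj (c \<cdot>\<^sub>m A) = cnj c \<cdot>\<^sub>m adj A"
  by (rule eq_matI) auto

lemma adj_uminus: "adj (- A) = - adj A"
  by (rule eq_matI) auto

lemma adj_zero [simp]: "adj (0\<^sub>m nr nc) = 0\<^sub>m nc nr"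
  by (rule eq_matI) auto

lemma adj_one [simp]: "adj (1\<^sub>m n) = 1\<^sub>m n"
  by (rule eq_matI) auto

lemma adj_four_block_mat:
  assumes "A \<in> carrier_mat nr1 nc1" "B \<in> carrier_mat nr1 nc2" "C \<in> carrier_mat nr2 nc1" "D \<in> carrier_mat nr2 nc2"
  shows "adj (four_block_mat A B C D) = four_block_mat (adj A) (adj C) (adj B) (adj D)"
  by (rule eq_matI) (use assms in auto)

lemma mtrace_mult_comm:
  assumes "A \<in> carrier_mat n m" "B \<in> carrier_mat m n"
  shows "mtrace (A * B) = mtrace (B * A)"
proof -
  have "mtrace (A * B) = (\<Sum>i<n. \<Sum>k<m. A $$ (i,k) * B $$ (k,i))"
    using assms by (auto simp: mtrace_def scalar_prod_def lessThan_atLeast0 intro!: sum.cong)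
  also have "\<dots> = (\<Sum>k<m. \<Sum>i<n. B $$ (k,i) * A $$ (i,k))"
    by (subst sum.swap) (simp add: mult.commute)
  also have "\<dots> = mtrace (B * A)"
    using assms by (auto simp: mtrace_def scalar_prod_def lessThan_atLeast0 intro!: sum.cong)
  finally show ?thesis .
qed

lemma mtrace_four_block_mat:
  assumes "A \<in> carrier_mat n1 n1" "D \<in> carrier_mat n2 n2"
  shows "mtrace (four_block_mat A B C D) = mtrace A + mtrace D"
proof -
  let ?F = "four_block_mat A B C D"
  have "mtrace ?F = (\<Sum>i\<in>{0..<n1+n2}. ?F $$ (i,i))"
    using assms by (simp add: mtrace_def lessThan_atLeast0)
  also have "\<dots> = (\<Sum>i\<in>{0..<n1}. ?F $$ (i,i)) + (\<Sum>i\<in>{n1..<n1+n2}. ?F $$ (i,i))"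
    by (rule sum.atLeastLessThan_concat[symmetric]) auto
  also have "(\<Sum>i\<in>{n1..<n1+n2}. ?F $$ (i,i)) = (\<Sum>i\<in>{0..<n2}. ?F $$ (i+n1, i+n1))"
    using sum.shift_bounds_nat_ivl[of "\<lambda>i. ?F $$ (i,i)" 0 n1 n2] by (simp add: add.commute)
  also have "(\<Sum>i\<in>{0..<n1}. ?F $$ (i,i)) + \<dots> = mtrace A + mtrace D"
    using assms by (auto simp: mtrace_def lessThan_atLeast0 intro!: sum.cong)
  finally show ?thesis .
qed

lemma mtrace_add: "A \<in> carrier_mat n n \<Longrightarrow> B \<in> carrier_mat n n \<Longrightarrow> mtrace (A + B) = mtrace A + mtrace B"
  by (simp add: mtrace_def sum.distrib)

lemma mtrace_smult: "A \<in> carrier_mat n n \<Longrightarrow> mtrace (c \<cdot>\<^sub>m A) = c * mtrace A"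
  by (simp add: mtrace_def sum_distrib_left)

lemma mtrace_uminus: "A \<in> carrier_mat n n \<Longrightarrow> mtrace (- A) = - mtrace A"
  by (simp add: mtrace_def sum_negf)

lemma mtrace_zero [simp]: "mtrace (0\<^sub>m n n) = 0"
  by (simp add: mtrace_def)

lemma mult_assoc_dims:
  fixes A B C :: "complex mat"
  shows "dim_col A = dim_row B \<Longrightarrow> dim_col B = dim_row C \<Longrightarrow> A * B * C = A * (B * C)"
  by (rule assoc_mult_mat[of A "dim_row A" "dim_col A" B "dim_col B" C "dim_col C"]) auto

lemma one_smult_mat [simp]: "(1::complex) \<cdot>\<^sub>m A = A"
  by (rule eq_matI) simp_all

lemma smult_smult_mat: "a \<cdot>\<^sub>m (b \<cdot>\<^sub>m A) = (a * b) \<cdot>\<^sub>m (A :: complex mat)"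
  by (rule eq_matI) auto

lemma uminus_zero_mat [simp]: "- 0\<^sub>m nr nc = (0\<^sub>m nr nc :: complex mat)"
  by (rule eq_matI) auto

lemma smult_one_mult [simp]:
  assumes "dim_row A = n"
  shows "(a \<cdot>\<^sub>m 1\<^sub>m n) * A = a \<cdot>\<^sub>m (A :: complex mat)"
proof -
  have A: "A \<in> carrier_mat n (dim_col A)"
    using assms by (intro carrier_matI) simp_all
  show ?thesis
    using mult_smult_assoc_mat[OF one_carrier_mat A] left_mult_one_mat[OF A] by simp
qed

lemma mult_smult_one [simp]:
  assumes "dim_col A = n"
  shows "A * (a \<cdot>\<^sub>m 1\<^sub>m n) = a \<cdot>\<^sub>m (A :: complex mat)"
proof -
  have A: "A \<in> carrier_mat (dim_row A) n"
    using assms by (intro carrier_matI) simp_all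
  show ?thesis
    using mult_smult_distrib[OF A one_carrier_mat] right_mult_one_mat[OF A] by simp
qed

lemma sandwich_real_linear:
  fixes L P Q R :: "complex mat"
  assumes L: "L \<in> carrier_mat r s" and P: "P \<in> carrier_mat s s" and Q: "Q \<in> carrier_mat s s"
    and R: "R \<in> carrier_mat s t"
  shows "L * (a \<cdot>\<^sub>m P + b \<cdot>\<^sub>m Q) * R = a \<cdot>\<^sub>m (L * P * R) + b \<cdot>\<^sub>m (L * Q * R)"
proof -
  have LP: "L * P \<in> carrier_mat r s" "L * Q \<in> carrier_mat r s"
    using L P Q by (metis mult_carrier_mat)+
  have "L * (a \<cdot>\<^sub>m P + b \<cdot>\<^sub>m Q) = a \<cdot>\<^sub>m (L * P) + b \<cdot>\<^sub>m (L * Q)"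
    using mult_add_distrib_mat[of L r s "a \<cdot>\<^sub>m P" s "b \<cdot>\<^sub>m Q"] L P Q
      mult_smult_distrib[OF L P] mult_smult_distrib[OF L Q] by simp
  moreover have "(a \<cdot>\<^sub>m (L * P) + b \<cdot>\<^sub>m (L * Q)) * R = a \<cdot>\<^sub>m (L * P * R) + b \<cdot>\<^sub>m (L * Q * R)"
    using add_mult_distrib_mat[of "a \<cdot>\<^sub>m (L * P)" r s "b \<cdot>\<^sub>m (L * Q)" R t] LP R
      mult_smult_assoc_mat[OF LP(1) R] mult_smult_assoc_mat[OF LP(2) R] by simp
  ultimately show ?thesis
    by simp
qed

lemma real_linear_on_add:
  assumes "real_linear_on S f" "X \<in> S" "Y \<in> S"
  shows "f (X + Y) = f X + f Y"
  using assms unfolding real_linear_on_def by (metis of_real_1 one_smult_mat)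

lemma Herm0_iff: "X \<in> Herm0 n \<longleftrightarrow> X \<in> carrier_mat n n \<and> adj X = X \<and> mtrace X = 0"
  by (auto simp: Herm0_def Herm_def)

lemma IHerm0_iff: "X \<in> IHerm0 n \<longleftrightarrow> X \<in> carrier_mat n n \<and> adj X = X \<and> mtrace X = 0 \<and> X * X = 1\<^sub>m n"
  by (auto simp: IHerm0_def Herm0_def Herm_def Unit_def)

lemma Unit_carrier: "U \<in> Unit n \<Longrightarrow> U \<in> carrier_mat n n"
  by (simp add: Unit_def)

lemma Unit_adj_mult: "U \<in> Unit n \<Longrightarrow> adj U * U = 1\<^sub>m n"
  by (simp add: Unit_def)

lemma Unit_mult_adj: "U \<in> Unit n \<Longrightarrow> U * adj U = 1\<^sub>m n"
  using mat_mult_left_right_inverse[of "adj U" n U] by (simp add: Unit_def)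

lemma Unit_adj_mult_cancel:
  assumes "U \<in> Unit n" "dim_row Y = n"
  shows "adj U * (U * Y) = Y"
proof -
  have "adj U * (U * Y) = (adj U * U) * Y"
    by (rule mult_assoc_dims[symmetric]) (use assms in \<open>auto simp: Unit_def\<close>)
  then show ?thesis
    using assms by (simp add: Unit_adj_mult)
qed

lemma Unit_mult_adj_cancel:
  assumes "U \<in> Unit n" "dim_row Y = n"
  shows "U * (adj U * Y) = Y"
proof -
  have "U * (adj U * Y) = (U * adj U) * Y"
    by (rule mult_assoc_dims[symmetric]) (use assms in \<open>auto simp: Unit_def\<close>)
  then show ?thesis
    using assms by (simp add: Unit_mult_adj)
qed

lemma Unit_adj: "U \<in> Unit n \<Longrightarrow> adj U \<in> Unit n"
  using Unit_mult_adj[of U n] by (simp add: Unit_def)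

lemma Unit_mult:
  assumes U: "U \<in> Unit n" and V: "V \<in> Unit n"
  shows "U * V \<in> Unit n"
proof -
  have Uc: "U \<in> carrier_mat n n" and Vc: "V \<in> carrier_mat n n"
    using U V by (simp_all add: Unit_carrier)
  have "adj (U * V) * (U * V) = adj V * (adj U * (U * V))"
    using Uc Vc by (simp add: adj_mult[of _ n n _ n] mult_assoc_dims)
  also have "\<dots> = 1\<^sub>m n"
    using U V Vc by (simp add: Unit_adj_mult_cancel Unit_adj_mult)
  finally show ?thesis
    using Uc Vc by (simp add: Unit_def)
qed

lemma one_Unit [simp]: "1\<^sub>m n \<in> Unit n"
  by (simp add: Unit_def)

lemma IHerm0_uminus: "X \<in> IHerm0 n \<Longrightarrow> - X \<in> IHerm0 n"
  by (auto simp: IHerm0_iff adj_uminus mtrace_uminus)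

lemma Herm0_conj_Unit:
  assumes G: "G \<in> Unit n" and X: "X \<in> Herm0 n"
  shows "G * X * adj G \<in> Herm0 n"
proof -
  have Gc: "G \<in> carrier_mat n n" and Xc: "X \<in> carrier_mat n n" and Xa: "adj X = X"
    and Xt: "mtrace X = 0"
    using G X by (simp_all add: Unit_carrier Herm0_iff)
  have dims [simp]: "dim_row G = n" "dim_col G = n" "dim_row X = n" "dim_col X = n"
    using Gc Xc by auto
  have "adj (G * X * adj G) = G * X * adj G"
    using Gc Xc Xa by (simp add: adj_mult[of _ n n _ n] mult_assoc_dims)
  moreover have "mtrace (G * X * adj G) = mtrace (X * adj G * G)"
    using mtrace_mult_comm[of G n n "X * adj G"] Gc Xc by (simp add: mult_assoc_dims)
  moreover have "X * adj G * G = X"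
    using Unit_adj_mult[OF G] Xc by (simp add: mult_assoc_dims)
  moreover have "G * X * adj G \<in> carrier_mat n n"
    using Gc Xc by (metis adj_carrier_mat mult_carrier_mat)
  ultimately show ?thesis
    using Xt by (simp add: Herm0_iff)
qed

lemma IHerm0_conj_Unit:
  assumes G: "G \<in> Unit n" and X: "X \<in> IHerm0 n"
  shows "G * X * adj G \<in> IHerm0 n"
proof -
  have Gc: "G \<in> carrier_mat n n" and Xc: "X \<in> carrier_mat n n" and XX: "X * X = 1\<^sub>m n"
    using G X by (simp_all add: Unit_carrier IHerm0_iff)
  have dims [simp]: "dim_row G = n" "dim_col G = n" "dim_row X = n" "dim_col X = n"
    using Gc Xc by auto
  have "(G * X * adj G) * (G * X * adj G) = G * (X * ((adj G * G) * (X * adj G)))"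
    by (simp add: mult_assoc_dims)
  also have "\<dots> = G * ((X * X) * adj G)"
    using Xc by (simp add: Unit_adj_mult[OF G] mult_assoc_dims)
  also have "\<dots> = 1\<^sub>m n"
    using Gc by (simp add: XX Unit_mult_adj[OF G])
  finally have "(G * X * adj G) * (G * X * adj G) = 1\<^sub>m n" .
  moreover have "G * X * adj G \<in> Herm0 n"
    using Herm0_conj_Unit[OF G] X by (simp add: Herm0_iff IHerm0_iff)
  ultimately show ?thesis
    by (simp add: Herm0_iff IHerm0_iff)
qed

lemma anticomm_conj:
  assumes H: "H \<in> carrier_mat n n" and X: "X \<in> carrier_mat n n"
    and GU: "G \<in> Unit n" and HX: "H * X + X * H = 0\<^sub>m n n"
  shows "(G * H * adj G) * (G * X * adj G) + (G * X * adj G) * (G * H * adj G) = 0\<^sub>m n n"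
proof -
  have G: "G \<in> carrier_mat n n"
    using GU by (simp add: Unit_carrier)
  then have dims [simp]: "dim_row G = n" "dim_col G = n" "dim_row H = n" "dim_col H = n"
    "dim_row X = n" "dim_col X = n"
    using H X by auto
  have "(G * H * adj G) * (G * X * adj G) = G * (H * X) * adj G"
    "(G * X * adj G) * (G * H * adj G) = G * (X * H) * adj G"
    using H X GU by (simp_all add: mult_assoc_dims Unit_adj_mult_cancel)
  moreover have "G * (H * X) * adj G + G * (X * H) * adj G = G * (H * X + X * H) * adj G"
    using G H X by (simp add: mult_add_distrib_mat[of _ n n _ n] add_mult_distrib_mat[of _ n n _ _ n])
  ultimately show ?thesis
    using G by (simp add: HX)
qed

lemma adj_midpoint_mult:
  fixes A B :: "complex mat"
  defines "c \<equiv> complex_of_real (1 / sqrt 2)"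
  assumes A: "A \<in> carrier_mat n n" and B: "B \<in> carrier_mat n n"
  shows "adj (c \<cdot>\<^sub>m A + c \<cdot>\<^sub>m B) * (c \<cdot>\<^sub>m A + c \<cdot>\<^sub>m B)
    = (1/2) \<cdot>\<^sub>m ((adj A * A + adj B * A) + (adj A * B + adj B * B))"
proof -
  have cc: "cnj c = c" "c * c = 1/2"
    by (simp_all add: c_def flip: of_real_mult)
  have "c \<cdot>\<^sub>m A + c \<cdot>\<^sub>m B = c \<cdot>\<^sub>m (A + B)"
    using A B by (simp add: add_smult_distrib_left_mat)
  moreover have "adj (c \<cdot>\<^sub>m (A + B)) = c \<cdot>\<^sub>m (adj A + adj B)"
    using A B cc by (simp add: adj_smult adj_add[of _ n n])
  moreover have "(c \<cdot>\<^sub>m (adj A + adj B)) * (c \<cdot>\<^sub>m (A + B)) = (c * c) \<cdot>\<^sub>m ((adj A + adj B) * (A + B))"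
    using A B by (simp add: mult_smult_distrib[of _ n n _ n] mult_smult_assoc_mat[of _ n n _ n] smult_smult_mat)
  moreover have "(adj A + adj B) * (A + B) = (adj A * A + adj B * A) + (adj A * B + adj B * B)"
    using A B by (simp add: add_mult_distrib_mat[of _ n n] mult_add_distrib_mat[of _ n n])
  ultimately show ?thesis
    using cc by simp
qed

lemma anticomm_IHerm0_midpoint:
  assumes H: "H \<in> IHerm0 n" and X: "X \<in> IHerm0 n" and HX: "H * X + X * H = 0\<^sub>m n n"
  shows "complex_of_real (1 / sqrt 2) \<cdot>\<^sub>m H + complex_of_real (1 / sqrt 2) \<cdot>\<^sub>m X \<in> IHerm0 n"
    (is "?S \<in> _")
proof -
  have Hc: "H \<in> carrier_mat n n" and Ha: "adj H = H" and Ht: "mtrace H = 0" and HH: "H * H = 1\<^sub>m n"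
    using H by (simp_all add: IHerm0_iff)
  have Xc: "X \<in> carrier_mat n n" and Xa: "adj X = X" and Xt: "mtrace X = 0" and XX: "X * X = 1\<^sub>m n"
    using X by (simp_all add: IHerm0_iff)
  have Sa: "adj ?S = ?S"
    using Hc Xc Ha Xa by (simp add: adj_add[of _ n n] adj_smult)
  have "?S * ?S = (1/2) \<cdot>\<^sub>m ((1\<^sub>m n + X * H) + (H * X + 1\<^sub>m n))"
    using adj_midpoint_mult[OF Hc Xc] Sa Ha Xa HH XX by simp
  also have "\<dots> = 1\<^sub>m n"
  proof (rule eq_matI)
    fix i j assume ij: "i < dim_row (1\<^sub>m n :: complex mat)" "j < dim_col (1\<^sub>m n :: complex mat)"
    have "(H * X) $$ (i,j) + (X * H) $$ (i,j) = 0"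
      using arg_cong[OF HX, of "\<lambda>M. M $$ (i,j)"] ij Hc Xc by simp
    then show "((1/2) \<cdot>\<^sub>m ((1\<^sub>m n + X * H) + (H * X + 1\<^sub>m n))) $$ (i,j) = 1\<^sub>m n $$ (i,j)"
      using ij Hc Xc by (simp add: field_simps)
  qed (use Hc Xc in auto)
  finally show ?thesis
    using Hc Xc Ht Xt Sa by (simp add: IHerm0_iff mtrace_add[of _ n] mtrace_smult)
qed

lemma Unit_midpoint_imp_anticomm:
  assumes P: "P \<in> Unit n" and M: "M \<in> Unit n"
    and S: "complex_of_real (1 / sqrt 2) \<cdot>\<^sub>m P + complex_of_real (1 / sqrt 2) \<cdot>\<^sub>m M \<in> Unit n"
  shows "adj P * M + adj M * P = 0\<^sub>m n n"
proof (rule eq_matI)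
  have Pc: "P \<in> carrier_mat n n" and Mc: "M \<in> carrier_mat n n"
    using P M by (simp_all add: Unit_carrier)
  have "(1/2) \<cdot>\<^sub>m ((1\<^sub>m n + adj M * P) + (adj P * M + 1\<^sub>m n)) = 1\<^sub>m n"
    using adj_midpoint_mult[OF Pc Mc] S Unit_adj_mult[OF P] Unit_adj_mult[OF M]
    by (simp add: Unit_def)
  fix i j assume ij: "i < dim_row (0\<^sub>m n n :: complex mat)" "j < dim_col (0\<^sub>m n n :: complex mat)"
  have "(1/2) * ((1\<^sub>m n $$ (i,j) + (adj M * P) $$ (i,j)) + ((adj P * M) $$ (i,j) + 1\<^sub>m n $$ (i,j)))
      = 1\<^sub>m n $$ (i,j)"
    using arg_cong[OF \<open>_ = 1\<^sub>m n\<close>, of "\<lambda>A. A $$ (i,j)"] ij Pc Mc by simp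
  then show "(adj P * M + adj M * P) $$ (i,j) = 0\<^sub>m n n $$ (i,j)"
    using ij Pc Mc by (simp add: field_simps)
qed (use P M in \<open>auto simp: Unit_def\<close>)

lemma anticomm_untwist:
  assumes U: "U \<in> Unit r" and V: "V \<in> Unit r" and K: "K \<in> carrier_mat r r" "adj K = K"
    and M: "M \<in> carrier_mat r r"
    and anticomm: "adj (U * K * V) * M + adj M * (U * K * V) = 0\<^sub>m r r"
  shows "K * (adj U * M * adj V) + adj (adj U * M * adj V) * K = 0\<^sub>m r r"
proof -
  define N where "N = adj U * M * adj V"
  define T where "T = K * N + adj N * K"
  have Uc: "U \<in> carrier_mat r r" and Vc: "V \<in> carrier_mat r r"
    using U V by (simp_all add: Unit_carrier)
  have dims [simp]: "dim_row U = r" "dim_col U = r" "dim_row V = r" "dim_col V = r"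
    "dim_row K = r" "dim_col K = r" "dim_row M = r" "dim_col M = r"
    using Uc Vc K M by auto
  have adj_N: "adj N = V * adj M * U"
    using Uc Vc M by (simp add: N_def adj_mult[of _ r r _ r] mult_assoc_dims)
  have Tc: "T \<in> carrier_mat r r"
    using K Uc Vc M by (simp add: T_def N_def carrier_matI)
  have "adj V * T * V = adj V * K * N * V + adj V * adj N * K * V"
    by (simp add: T_def N_def mult_add_distrib_mat[of _ r r _ r] add_mult_distrib_mat[of _ r r _ _ r]
        mult_assoc_dims carrier_matI)
  also have "\<dots> = adj (U * K * V) * M + adj M * (U * K * V)"
    unfolding adj_N using U V K M
    by (simp add: N_def adj_mult[of _ r r _ r] mult_assoc_dims Unit_adj_mult_cancel Unit_adj_mult carrier_matI)
  finally have "adj V * T * V = 0\<^sub>m r r"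
    using anticomm by simp
  then have "V * (adj V * T * V) * adj V = 0\<^sub>m r r"
    by simp
  moreover have "V * (adj V * T * V) * adj V = T"
    using V Tc by (simp add: mult_assoc_dims Unit_mult_adj_cancel Unit_mult_adj carrier_matD)
  ultimately show ?thesis
    by (simp add: T_def N_def)
qed

definition herm_part :: "complex mat \<Rightarrow> complex mat" where
  "herm_part A = (1/2) \<cdot>\<^sub>m (A + adj A)"

lemma herm_part_Herm: "A \<in> carrier_mat n n \<Longrightarrow> herm_part A \<in> Herm n"
  unfolding Herm_def herm_part_def by (auto intro!: eq_matI simp: algebra_simps)

lemma herm_part_of_Herm: "A \<in> Herm n \<Longrightarrow> herm_part A = A"
  unfolding Herm_def herm_part_def by (auto intro!: eq_matI)

lemma herm_part_real_linear:
  assumes "A \<in> carrier_mat n n" "B \<in> carrier_mat n n"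
  shows "herm_part (complex_of_real a \<cdot>\<^sub>m A + complex_of_real b \<cdot>\<^sub>m B)
    = complex_of_real a \<cdot>\<^sub>m herm_part A + complex_of_real b \<cdot>\<^sub>m herm_part B"
  unfolding herm_part_def by (rule eq_matI) (use assms in \<open>auto simp: algebra_simps\<close>)

lemma i_smult_skew_Unit:
  assumes skew: "adj A = - A" and A: "A \<in> Unit n"
  shows "\<i> \<cdot>\<^sub>m A \<in> Herm n \<inter> Unit n"
proof -
  have Ac: "A \<in> carrier_mat n n"
    using A by (simp add: Unit_carrier)
  have herm: "adj (\<i> \<cdot>\<^sub>m A) = \<i> \<cdot>\<^sub>m A"
    by (rule eq_matI) (use skew in \<open>auto simp: adj_smult\<close>)
  have "adj (\<i> \<cdot>\<^sub>m A) * (\<i> \<cdot>\<^sub>m A) = (- \<i> * \<i>) \<cdot>\<^sub>m (adj A * A)"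
    using Ac by (simp add: adj_smult mult_smult_distrib[of _ n n _ n] mult_smult_assoc_mat[of _ n n _ n] smult_smult_mat)
  then have "adj (\<i> \<cdot>\<^sub>m A) * (\<i> \<cdot>\<^sub>m A) = 1\<^sub>m n"
    using Unit_adj_mult[OF A] by simp
  then show ?thesis
    using Ac herm by (simp add: Herm_def Unit_def)
qed

section \<open>Block matrices\<close>

lemma dsum_four_block:
  "A \<in> carrier_mat n1 n1 \<Longrightarrow> B \<in> carrier_mat n2 n2 \<Longrightarrow> dsum A B = four_block_mat A (0\<^sub>m n1 n2) (0\<^sub>m n2 n1) B"
  by (simp add: dsum_def)

lemma dsum_carrier_mat [simp]:
  "A \<in> carrier_mat n1 n1 \<Longrightarrow> B \<in> carrier_mat n2 n2 \<Longrightarrow> dsum A B \<in> carrier_mat (n1 + n2) (n1 + n2)"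
  by (simp add: dsum_def)

lemma adj_dsum: "adj (dsum A B) = dsum (adj A) (adj B)"
  by (rule eq_matI) (auto simp: dsum_def)

lemma mtrace_dsum:
  "A \<in> carrier_mat n1 n1 \<Longrightarrow> B \<in> carrier_mat n2 n2 \<Longrightarrow> mtrace (dsum A B) = mtrace A + mtrace B"
  by (simp add: dsum_def mtrace_four_block_mat)

lemma dsum_add:
  assumes "A \<in> carrier_mat n1 n1" "C \<in> carrier_mat n1 n1" "B \<in> carrier_mat n2 n2" "D \<in> carrier_mat n2 n2"
  shows "dsum A B + dsum C D = dsum (A + C) (B + D)"
  by (rule eq_matI) (use assms in \<open>auto simp: dsum_def\<close>)

lemma dsum_mult:
  assumes "A \<in> carrier_mat n1 n1" "C \<in> carrier_mat n1 n1" "B \<in> carrier_mat n2 n2" "D \<in> carrier_mat n2 n2"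
  shows "dsum A B * dsum C D = dsum (A * C) (B * D)"
proof -
  have "dsum A B * dsum C D = four_block_mat (A * C) (0\<^sub>m n1 n2) (0\<^sub>m n2 n1) (B * D)"
    using assms by (simp add: dsum_four_block mult_four_block_mat[of _ n1 n1 _ n2 _ n2 _ _ n1 _ n2])
  also have "\<dots> = dsum (A * C) (B * D)"
    using assms by (simp add: dsum_def)
  finally show ?thesis .
qed

lemma dsum_one [simp]: "dsum (1\<^sub>m n1) (1\<^sub>m n2) = 1\<^sub>m (n1 + n2)"
  by (simp add: dsum_def)

lemma dsum_Herm0:
  assumes "A \<in> Herm0 n1" "B \<in> Herm0 n2"
  shows "dsum A B \<in> Herm0 (n1 + n2)"
  using assms mtrace_dsum[of A n1 B n2] by (simp add: Herm0_iff adj_dsum)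

lemma dsum_IHerm0:
  assumes "A \<in> IHerm0 n1" "B \<in> IHerm0 n2"
  shows "dsum A B \<in> IHerm0 (n1 + n2)"
  using assms mtrace_dsum[of A n1 B n2] dsum_mult[of A n1 A B n2 B] by (simp add: IHerm0_iff adj_dsum)

lemma dsum_Unit:
  assumes "W \<in> Unit n1" "W' \<in> Unit n2"
  shows "dsum W W' \<in> Unit (n1 + n2)"
  using assms dsum_mult[of "adj W" n1 W "adj W'" n2 W'] by (simp add: Unit_def adj_dsum)

lemma dsum_conj:
  assumes "W \<in> carrier_mat n1 n1" "A \<in> carrier_mat n1 n1" "W' \<in> carrier_mat n2 n2" "B \<in> carrier_mat n2 n2"
  shows "dsum W W' * dsum A B * adj (dsum W W') = dsum (W * A * adj W) (W' * B * adj W')"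
proof -
  have "dsum W W' * dsum A B = dsum (W * A) (W' * B)"
    using assms by (simp add: dsum_mult)
  moreover have "W * A \<in> carrier_mat n1 n1" "W' * B \<in> carrier_mat n2 n2"
    using assms by (metis mult_carrier_mat)+
  ultimately show ?thesis
    using assms dsum_mult[of "W * A" n1 "adj W" "W' * B" n2 "adj W'"] by (simp add: adj_dsum)
qed

lemma dsum_one_conj_four_block:
  assumes W: "W \<in> carrier_mat n n" and "P \<in> carrier_mat n n" "Q \<in> carrier_mat n p"
    "R \<in> carrier_mat p n" "S \<in> carrier_mat p p"
  shows "dsum W (1\<^sub>m p) * four_block_mat P Q R S * adj (dsum W (1\<^sub>m p))
    = four_block_mat (W * P * adj W) (W * Q) (R * adj W) S"
proof -
  have "adj (dsum W (1\<^sub>m p)) = four_block_mat (adj W) (0\<^sub>m n p) (0\<^sub>m p n) (1\<^sub>m p)"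
    using W by (simp add: adj_dsum dsum_four_block)
  moreover have "dsum W (1\<^sub>m p) * four_block_mat P Q R S = four_block_mat (W * P) (W * Q) R S"
    using assms by (simp add: dsum_four_block[OF W one_carrier_mat] mult_four_block_mat[of _ n n _ p _ p _ _ n _ p] carrier_matD)
  moreover have "W * P \<in> carrier_mat n n" "W * Q \<in> carrier_mat n p" "W * P * adj W \<in> carrier_mat n n"
    using assms by (metis mult_carrier_mat adj_carrier_mat)+
  ultimately show ?thesis
    using assms by (simp add: mult_four_block_mat[of _ n n _ p _ p _ _ n _ p] carrier_matD)
qed

lemma four_block_eq_upper_left:
  assumes eq: "four_block_mat A B C D = four_block_mat A' B' C' D'"
    and "A \<in> carrier_mat nr nc" "A' \<in> carrier_mat nr nc"
    and "dim_row D = dim_row D'" "dim_col D = dim_col D'"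
  shows "A = A'"
proof (rule eq_matI)
  fix i j assume ij: "i < dim_row A'" "j < dim_col A'"
  have "four_block_mat A B C D $$ (i,j) = four_block_mat A' B' C' D' $$ (i,j)"
    using eq by simp
  then show "A $$ (i,j) = A' $$ (i,j)"
    using ij assms(2-5) by simp
qed (use assms(2,3) in simp_all)

definition herm_dilation :: "complex mat \<Rightarrow> complex mat" where
  "herm_dilation C = four_block_mat (0\<^sub>m (dim_row C) (dim_row C)) C (adj C) (0\<^sub>m (dim_col C) (dim_col C))"

lemma herm_dilation_Herm0:
  assumes "C \<in> carrier_mat n p"
  shows "herm_dilation C \<in> Herm0 (n + p)"
  using assms adj_four_block_mat[of "0\<^sub>m n n" n n C p "adj C" p "0\<^sub>m p p"]
    mtrace_four_block_mat[of "0\<^sub>m n n" n "0\<^sub>m p p" p]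
  by (simp add: herm_dilation_def Herm0_iff)

lemma herm_dilation_real_linear:
  assumes "C \<in> carrier_mat n p" "C' \<in> carrier_mat n p"
  shows "herm_dilation (complex_of_real a \<cdot>\<^sub>m C + complex_of_real b \<cdot>\<^sub>m C')
    = complex_of_real a \<cdot>\<^sub>m herm_dilation C + complex_of_real b \<cdot>\<^sub>m herm_dilation C'"
  by (rule eq_matI) (use assms in \<open>auto simp: herm_dilation_def\<close>)

lemma four_block_eq_dsum_add_herm_dilation:
  assumes "P \<in> carrier_mat n n" "Q \<in> carrier_mat n p"
  shows "four_block_mat P Q (adj Q) (0\<^sub>m p p) = dsum P (0\<^sub>m p p) + herm_dilation Q"
  by (rule eq_matI) (use assms in \<open>auto simp: dsum_def herm_dilation_def\<close>)

lemma four_block_reflection_IHerm0: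
  assumes D: "D \<in> Herm0 n" and E: "E \<in> carrier_mat n p"
    and DD: "D * D + E * adj E = 1\<^sub>m n" and DE: "D * E = 0\<^sub>m n p" and EE: "adj E * E = 1\<^sub>m p"
  shows "four_block_mat D E (adj E) (0\<^sub>m p p) \<in> IHerm0 (n + p)"
proof -
  let ?X = "four_block_mat D E (adj E) (0\<^sub>m p p)"
  have Dc: "D \<in> carrier_mat n n" and Da: "adj D = D" and Dt: "mtrace D = 0"
    using D by (simp_all add: Herm0_iff)
  have ED: "adj E * D = 0\<^sub>m p n"
    using adj_mult[OF Dc E] Da DE by simp
  have "adj ?X = ?X"
    using Dc Da E by (simp add: adj_four_block_mat[of D n n E p "adj E" p])
  moreover have "mtrace ?X = 0"
    using Dc Dt E by (simp add: mtrace_four_block_mat[of D n "0\<^sub>m p p" p])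
  moreover have "?X * ?X = 1\<^sub>m (n + p)"
    using Dc E by (simp add: mult_four_block_mat[of _ n n _ p _ p _ _ n _ p] DD DE ED EE carrier_matD)
  ultimately show ?thesis
    using Dc E by (simp add: IHerm0_iff)
qed

lemma dsum_four_block_anticomm:
  assumes A: "A \<in> carrier_mat n n" "adj A = A" and B: "B \<in> carrier_mat p p" "adj B = B"
    and D: "D \<in> carrier_mat n n" and E: "E \<in> carrier_mat n p"
    and AD: "A * D + D * A = 0\<^sub>m n n" and AE: "A * E + E * B = 0\<^sub>m n p"
  shows "dsum A B * four_block_mat D E (adj E) (0\<^sub>m p p) + four_block_mat D E (adj E) (0\<^sub>m p p) * dsum A B
    = 0\<^sub>m (n + p) (n + p)"
proof -
  have EA: "B * adj E + adj E * A = 0\<^sub>m p n"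
  proof -
    have "adj (A * E + E * B) = adj E * A + B * adj E"
      using A B E by (simp add: adj_add[of _ n p] adj_mult[of _ n n _ p] adj_mult[of _ n p _ p])
    also have "\<dots> = B * adj E + adj E * A"
      using A B E by (intro comm_add_mat[of _ p n]) auto
    finally show ?thesis
      using AE by simp
  qed
  have "dsum A B * four_block_mat D E (adj E) (0\<^sub>m p p) + four_block_mat D E (adj E) (0\<^sub>m p p) * dsum A B
    = four_block_mat (A * D + D * A) (A * E + E * B) (B * adj E + adj E * A) (0\<^sub>m p p)"
    using A B D E right_add_zero_mat[of "adj E * A" p n] mult_carrier_mat[OF adj_carrier_mat[OF E] A(1)]
    by (simp add: dsum_four_block[OF A(1) B(1)] mult_four_block_mat[of _ n n _ p _ p _ _ n _ p]
        add_four_block_mat[of _ n n _ p _ p] carrier_matD)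
  then show ?thesis
    using AD AE EA by simp
qed

section \<open>A Hermitian unitary with many anticommuting partners\<close>

(*
  pauli_z_block m and pauli_x_block m are \<sigma>_z \<otimes> I_m and \<sigma>_x \<otimes> I_m. In dimension
  n = 2 + 2m, E = embed2 m embeds C^2 onto the first two coordinates and D = compl_reflection m
  is a reflection of the orthogonal complement of its range; X_0 = [[D, E], [E^*, 0]] is then a
  Hermitian unitary, anticommuting with partner m B \<oplus> B for every B \<in> IH^0_2.
*)

definition pauli_z_block :: "nat \<Rightarrow> complex mat" where
  "pauli_z_block m = dsum (1\<^sub>m m) (- 1\<^sub>m m)"

definition pauli_x_block :: "nat \<Rightarrow> complex mat" where
  "pauli_x_block m = four_block_mat (0\<^sub>m m m) (1\<^sub>m m) (1\<^sub>m m) (0\<^sub>m m m)"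

definition embed2 :: "nat \<Rightarrow> complex mat" where
  "embed2 m = four_block_mat (1\<^sub>m 2) (0\<^sub>m 2 0) (0\<^sub>m (m+m) 2) (0\<^sub>m (m+m) 0)"

definition compl_reflection :: "nat \<Rightarrow> complex mat" where
  "compl_reflection m = dsum (0\<^sub>m 2 2) (pauli_z_block m)"

definition corner_reflection :: "nat \<Rightarrow> complex mat" where
  "corner_reflection m = four_block_mat (compl_reflection m) (embed2 m) (adj (embed2 m)) (0\<^sub>m 2 2)"

definition partner :: "nat \<Rightarrow> complex mat \<Rightarrow> complex mat" where
  "partner m B = dsum (- B) (pauli_x_block m)"

lemma pauli_z_block_dims [simp]:
  "dim_row (pauli_z_block m) = m+m" "dim_col (pauli_z_block m) = m+m"
  by (simp_all add: pauli_z_block_def dsum_def)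

lemma pauli_x_block_dims [simp]:
  "dim_row (pauli_x_block m) = m+m" "dim_col (pauli_x_block m) = m+m"
  by (simp_all add: pauli_x_block_def)

lemma pauli_z_block_carrier [simp]: "pauli_z_block m \<in> carrier_mat (m+m) (m+m)"
  by (simp add: carrier_matI)

lemma pauli_x_block_carrier [simp]: "pauli_x_block m \<in> carrier_mat (m+m) (m+m)"
  by (simp add: carrier_matI)

lemma embed2_carrier [simp]: "embed2 m \<in> carrier_mat (2+(m+m)) 2"
  unfolding embed2_def
  using four_block_carrier_mat[of "1\<^sub>m 2" 2 2 "0\<^sub>m (m+m) 0" "m+m" 0] by simp

lemma compl_reflection_carrier [simp]: "compl_reflection m \<in> carrier_mat (2+(m+m)) (2+(m+m))"
  unfolding compl_reflection_def by (rule dsum_carrier_mat) simp_all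

lemma pauli_z_block_sq: "pauli_z_block m * pauli_z_block m = 1\<^sub>m (m+m)"
  by (simp add: pauli_z_block_def dsum_mult[of _ m _ _ m])

lemma pauli_x_block_IHerm0: "pauli_x_block m \<in> IHerm0 (m+m)"
  by (simp add: pauli_x_block_def IHerm0_iff adj_four_block_mat[of _ m m _ m _ m]
      mtrace_four_block_mat[of _ m _ m] mult_four_block_mat[of _ m m _ m _ m _ _ m _ m])

lemma pauli_x_z_block_anticomm:
  "pauli_x_block m * pauli_z_block m + pauli_z_block m * pauli_x_block m = 0\<^sub>m (m+m) (m+m)"
proof -
  have [simp]: "- 1\<^sub>m m + 1\<^sub>m m = (0\<^sub>m m m :: complex mat)" "1\<^sub>m m + - 1\<^sub>m m = (0\<^sub>m m m :: complex mat)"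
    by (rule eq_matI; simp)+
  show ?thesis
    by (simp add: pauli_x_block_def pauli_z_block_def dsum_four_block[of _ m _ m]
      mult_four_block_mat[of _ m m _ m _ m _ _ m _ m] add_four_block_mat[of _ m m _ m _ m])
qed

lemma compl_reflection_Herm0: "compl_reflection m \<in> Herm0 (2+(m+m))"
  using compl_reflection_carrier[of m]
  by (simp add: Herm0_iff compl_reflection_def pauli_z_block_def adj_dsum adj_uminus
      mtrace_dsum[of _ 2 _ "m+m"] mtrace_dsum[of _ m _ m] mtrace_uminus[of _ m])

lemma compl_reflection_sq: "compl_reflection m * compl_reflection m = dsum (0\<^sub>m 2 2) (1\<^sub>m (m+m))"
  by (simp add: compl_reflection_def dsum_mult[of _ 2 _ _ "m+m"] pauli_z_block_sq)

lemma adj_embed2: "adj (embed2 m) = four_block_mat (1\<^sub>m 2) (0\<^sub>m 2 (m+m)) (0\<^sub>m 0 2) (0\<^sub>m 0 (m+m))"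
  by (simp add: embed2_def adj_four_block_mat[of _ 2 2 _ 0 _ "m+m"])

lemma embed2_mult_adj: "embed2 m * adj (embed2 m) = dsum (1\<^sub>m 2) (0\<^sub>m (m+m) (m+m))"
  unfolding adj_embed2 by (simp add: embed2_def dsum_def mult_four_block_mat[of _ 2 2 _ 0 _ "m+m" _ _ 2 _ "m+m"])

lemma adj_embed2_mult: "adj (embed2 m) * embed2 m = 1\<^sub>m 2"
proof -
  have "adj (embed2 m) * embed2 m = four_block_mat (1\<^sub>m 2) (0\<^sub>m 2 0) (0\<^sub>m 0 2) (0\<^sub>m 0 0)"
    unfolding adj_embed2 by (simp add: embed2_def mult_four_block_mat[of _ 2 2 _ "m+m" _ 0 _ _ 2 _ 0])
  also have "\<dots> = 1\<^sub>m 2"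
    by (rule eq_matI) auto
  finally show ?thesis .
qed

lemma compl_reflection_embed2: "compl_reflection m * embed2 m = 0\<^sub>m (2+(m+m)) 2"
  by (simp add: compl_reflection_def dsum_four_block[of _ 2 _ "m+m"] embed2_def
      mult_four_block_mat[of _ 2 2 _ "m+m" _ "m+m" _ _ 2 _ 0])

lemma corner_reflection_IHerm0: "corner_reflection m \<in> IHerm0 (2+(m+m)+2)"
  unfolding corner_reflection_def
proof (rule four_block_reflection_IHerm0[OF compl_reflection_Herm0 embed2_carrier])
  show "compl_reflection m * compl_reflection m + embed2 m * adj (embed2 m) = 1\<^sub>m (2+(m+m))"
    by (simp add: compl_reflection_sq embed2_mult_adj dsum_def add_four_block_mat[of _ 2 2 _ "m+m" _ "m+m"])
qed (rule compl_reflection_embed2 adj_embed2_mult)+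

lemma partner_IHerm0: "B \<in> IHerm0 2 \<Longrightarrow> partner m B \<in> IHerm0 (2+(m+m))"
  unfolding partner_def by (intro dsum_IHerm0 IHerm0_uminus pauli_x_block_IHerm0)

lemma partner_compl_reflection_anticomm:
  assumes B: "B \<in> carrier_mat 2 2"
  shows "partner m B * compl_reflection m + compl_reflection m * partner m B = 0\<^sub>m (2+(m+m)) (2+(m+m))"
proof -
  let ?X = "pauli_x_block m" and ?Z = "pauli_z_block m"
  have "partner m B * compl_reflection m = dsum (0\<^sub>m 2 2) (?X * ?Z)"
    "compl_reflection m * partner m B = dsum (0\<^sub>m 2 2) (?Z * ?X)"
    using B by (simp_all add: partner_def compl_reflection_def dsum_mult[of _ 2 _ _ "m+m"])
  moreover have "?X * ?Z \<in> carrier_mat (m+m) (m+m)" "?Z * ?X \<in> carrier_mat (m+m) (m+m)"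
    by (simp_all add: carrier_matI)
  ultimately have "partner m B * compl_reflection m + compl_reflection m * partner m B
      = dsum (0\<^sub>m 2 2 + 0\<^sub>m 2 2) (?X * ?Z + ?Z * ?X)"
    by (simp add: dsum_add[of _ 2 _ _ "m+m"])
  then show ?thesis
    by (simp add: pauli_x_z_block_anticomm dsum_def)
qed

lemma partner_embed2:
  assumes B: "B \<in> carrier_mat 2 2"
  shows "partner m B * embed2 m + embed2 m * B = 0\<^sub>m (2+(m+m)) 2"
proof -
  have B_block: "B = four_block_mat B (0\<^sub>m 2 0) (0\<^sub>m 0 2) (0\<^sub>m 0 0)"
    by (rule eq_matI) (use B in auto)
  have "partner m B * embed2 m = four_block_mat (- B) (0\<^sub>m 2 0) (0\<^sub>m (m+m) 2) (0\<^sub>m (m+m) 0)"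
    using B by (simp add: partner_def dsum_four_block[of _ 2 _ "m+m"] embed2_def
        mult_four_block_mat[of _ 2 2 _ "m+m" _ "m+m" _ _ 2 _ 0])
  moreover have "embed2 m * B = four_block_mat B (0\<^sub>m 2 0) (0\<^sub>m (m+m) 2) (0\<^sub>m (m+m) 0)"
    using B by (subst B_block) (simp add: embed2_def mult_four_block_mat[of _ 2 2 _ 0 _ "m+m" _ _ 2 _ 0])
  ultimately show ?thesis
    using B by (simp add: add_four_block_mat[of _ 2 2 _ 0 _ "m+m"])
qed

lemma partner_corner_reflection_anticomm:
  assumes B: "B \<in> IHerm0 2"
  shows "dsum (partner m B) B * corner_reflection m + corner_reflection m * dsum (partner m B) B
    = 0\<^sub>m (2+(m+m)+2) (2+(m+m)+2)"
  unfolding corner_reflection_def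
  using partner_IHerm0[OF B] B compl_reflection_carrier[of m] embed2_carrier[of m]
  by (intro dsum_four_block_anticomm partner_compl_reflection_anticomm partner_embed2)
    (simp_all add: IHerm0_iff)

section \<open>Kronecker products with an identity matrix\<close>

lemma div_mod_less_double:
  assumes "(i::nat) < q + q"
  shows "i div q = (if i < q then 0 else 1)" "i mod q = (if i < q then i else i - q)"
proof -
  have "q \<le> i \<Longrightarrow> i - q < q"
    using assms by linarith
  then show "i div q = (if i < q then 0 else 1)" "i mod q = (if i < q then i else i - q)"
    using le_div_geq[of q i] le_mod_geq[of q i] by auto
qed

lemma kron_one_four_block:
  assumes B: "B \<in> carrier_mat 2 2"
  shows "kron B (1\<^sub>m q) = four_block_mat (B $$ (0,0) \<cdot>\<^sub>m 1\<^sub>m q) (B $$ (0,1) \<cdot>\<^sub>m 1\<^sub>m q)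
    (B $$ (1,0) \<cdot>\<^sub>m 1\<^sub>m q) (B $$ (1,1) \<cdot>\<^sub>m 1\<^sub>m q)" (is "_ = ?F")
proof (rule eq_matI)
  fix i j assume "i < dim_row ?F" "j < dim_col ?F"
  then have i: "i < q + q" and j: "j < q + q"
    by simp_all
  have "kron B (1\<^sub>m q) $$ (i,j) = B $$ (i div q, j div q) * 1\<^sub>m q $$ (i mod q, j mod q)"
    using B i j by (simp add: kron_def mult_2)
  then show "kron B (1\<^sub>m q) $$ (i,j) = ?F $$ (i,j)"
    using i j by (auto simp: div_mod_less_double)
qed (use B in \<open>simp_all add: kron_def mult_2\<close>)

lemma kron_one_carrier [simp]: "B \<in> carrier_mat 2 2 \<Longrightarrow> kron B (1\<^sub>m q) \<in> carrier_mat (2*q) (2*q)"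
  unfolding kron_def by (rule carrier_matI) auto

lemma kron_zero_one [simp]: "kron (0\<^sub>m 2 2) (1\<^sub>m q) = 0\<^sub>m (2*q) (2*q)"
  by (rule eq_matI) (simp_all add: kron_def less_mult_imp_div_less)

lemma adj_kron_one:
  assumes "B \<in> Herm 2"
  shows "adj (kron B (1\<^sub>m q)) = kron B (1\<^sub>m q)"
proof -
  have B: "B \<in> carrier_mat 2 2" and Ba: "adj B = B"
    using assms by (simp_all add: Herm_def)
  have "cnj (B $$ (j,i)) = B $$ (i,j)" if "i < 2" "j < 2" for i j
  proof -
    have "adj B $$ (i,j) = B $$ (i,j)"
      by (simp add: Ba)
    then show ?thesis
      using that B by simp
  qed
  then show ?thesis
    using B by (simp add: kron_one_four_block adj_four_block_mat[of _ q q _ q _ q] adj_smult)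
qed

definition pauli_x :: "complex mat" where
  "pauli_x = mat 2 2 (\<lambda>(i,j). if i = j then 0 else 1)"

definition pauli_y :: "complex mat" where
  "pauli_y = mat 2 2 (\<lambda>(i,j). if i = j then 0 else if i = 0 then - \<i> else \<i>)"

definition pauli_z :: "complex mat" where
  "pauli_z = mat 2 2 (\<lambda>(i,j). if i \<noteq> j then 0 else if i = 0 then 1 else -1)"

lemma IHerm0_2I:
  assumes S: "S \<in> carrier_mat 2 2"
    and herm: "\<And>i j. i < 2 \<Longrightarrow> j < 2 \<Longrightarrow> cnj (S $$ (j,i)) = S $$ (i,j)"
    and trace: "S $$ (0,0) + S $$ (1,1) = 0"
    and square: "\<And>i j. i < 2 \<Longrightarrow> j < 2 \<Longrightarrow>
      S $$ (i,0) * S $$ (0,j) + S $$ (i,1) * S $$ (1,j) = (if i = j then 1 else 0)"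
  shows "S \<in> IHerm0 2"
proof -
  have "adj S = S"
    by (rule eq_matI) (use S herm in auto)
  moreover have "mtrace S = 0"
    using S trace by (simp add: mtrace_def numeral_2_eq_2)
  moreover have "S * S = 1\<^sub>m 2"
    by (rule eq_matI) (use S square in \<open>auto simp: scalar_prod_def numeral_2_eq_2\<close>)
  ultimately show ?thesis
    using S by (simp add: IHerm0_iff)
qed

lemma pauli_IHerm0: "pauli_x \<in> IHerm0 2" "pauli_y \<in> IHerm0 2" "pauli_z \<in> IHerm0 2"
  by (rule IHerm0_2I; auto simp: pauli_x_def pauli_y_def pauli_z_def dest!: less_2_cases)+

lemma kron_anticomm_upper_left:
  assumes B: "B \<in> carrier_mat 2 2"
    and N: "N1 \<in> carrier_mat q q" "N2 \<in> carrier_mat q q" "N3 \<in> carrier_mat q q" "N4 \<in> carrier_mat q q"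
    and eq: "kron B (1\<^sub>m q) * four_block_mat N1 N2 N3 N4 + adj (four_block_mat N1 N2 N3 N4) * kron B (1\<^sub>m q)
      = 0\<^sub>m (q+q) (q+q)"
    and ij: "i < q" "j < q"
  shows "B $$ (0,0) * N1 $$ (i,j) + B $$ (0,1) * N3 $$ (i,j)
    + (B $$ (0,0) * cnj (N1 $$ (j,i)) + B $$ (1,0) * cnj (N3 $$ (j,i))) = 0"
proof -
  let ?a = "B $$ (0,0)" and ?b = "B $$ (0,1)" and ?c = "B $$ (1,0)" and ?d = "B $$ (1,1)"
  have blocks: "four_block_mat
      (?a \<cdot>\<^sub>m N1 + ?b \<cdot>\<^sub>m N3 + (?a \<cdot>\<^sub>m adj N1 + ?c \<cdot>\<^sub>m adj N3))
      (?a \<cdot>\<^sub>m N2 + ?b \<cdot>\<^sub>m N4 + (?b \<cdot>\<^sub>m adj N1 + ?d \<cdot>\<^sub>m adj N3))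
      (?c \<cdot>\<^sub>m N1 + ?d \<cdot>\<^sub>m N3 + (?a \<cdot>\<^sub>m adj N2 + ?c \<cdot>\<^sub>m adj N4))
      (?c \<cdot>\<^sub>m N2 + ?d \<cdot>\<^sub>m N4 + (?b \<cdot>\<^sub>m adj N2 + ?d \<cdot>\<^sub>m adj N4))
    = four_block_mat (0\<^sub>m q q) (0\<^sub>m q q) (0\<^sub>m q q) (0\<^sub>m q q)"
    using eq B N
    by (simp add: kron_one_four_block adj_four_block_mat[of _ q q _ q _ q]
        mult_four_block_mat[of _ q q _ q _ q _ _ q _ q] add_four_block_mat[of _ q q _ q _ q] carrier_matD)
  have "?a \<cdot>\<^sub>m N1 + ?b \<cdot>\<^sub>m N3 + (?a \<cdot>\<^sub>m adj N1 + ?c \<cdot>\<^sub>m adj N3) \<in> carrier_mat q q"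
    using N by (metis add_carrier_mat adj_carrier_mat smult_carrier_mat)
  then have "?a \<cdot>\<^sub>m N1 + ?b \<cdot>\<^sub>m N3 + (?a \<cdot>\<^sub>m adj N1 + ?c \<cdot>\<^sub>m adj N3) = 0\<^sub>m q q"
    by (rule four_block_eq_upper_left[OF blocks, where nr = q and nc = q]) (use N in simp_all)
  from arg_cong[OF this, of "\<lambda>A. A $$ (i,j)"] show ?thesis
    using ij N by simp
qed

lemma Unit_upper_left:
  assumes N: "N1 \<in> carrier_mat q q" "N2 \<in> carrier_mat q q" "N3 \<in> carrier_mat q q" "N4 \<in> carrier_mat q q"
    and eq: "adj (four_block_mat N1 N2 N3 N4) * four_block_mat N1 N2 N3 N4 = 1\<^sub>m (q+q)"
  shows "adj N1 * N1 + adj N3 * N3 = 1\<^sub>m q"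
proof -
  have blocks: "four_block_mat (adj N1 * N1 + adj N3 * N3) (adj N1 * N2 + adj N3 * N4)
      (adj N2 * N1 + adj N4 * N3) (adj N2 * N2 + adj N4 * N4)
    = four_block_mat (1\<^sub>m q) (0\<^sub>m q q) (0\<^sub>m q q) (1\<^sub>m q)"
    using eq N by (simp add: adj_four_block_mat[of _ q q _ q _ q] mult_four_block_mat[of _ q q _ q _ q _ _ q _ q])
  have "adj N1 * N1 + adj N3 * N3 \<in> carrier_mat q q"
    using N by (metis add_carrier_mat adj_carrier_mat mult_carrier_mat)
  then show ?thesis
    by (rule four_block_eq_upper_left[OF blocks, where nr = q and nc = q]) (use N in simp_all)
qed

definition ul_block :: "nat \<Rightarrow> complex mat \<Rightarrow> complex mat" where
  "ul_block q N = mat q q (\<lambda>ij. N $$ ij)"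

lemma kron_anticomm_ul_block:
  assumes N: "N \<in> carrier_mat (q+q) (q+q)" "adj N * N = 1\<^sub>m (q+q)"
    and anticomm: "\<And>B. B \<in> IHerm0 2 \<Longrightarrow> kron B (1\<^sub>m q) * N + adj N * kron B (1\<^sub>m q) = 0\<^sub>m (q+q) (q+q)"
  shows "adj (ul_block q N) = - ul_block q N" "ul_block q N \<in> Unit q"
proof -
  obtain N1 N2 N3 N4 where split: "split_block N q q = (N1, N2, N3, N4)"
    by (cases "split_block N q q") auto
  note blocks = split_block[OF split carrier_matD[OF N(1)]]
  have N1: "N1 = ul_block q N"
    using split by (simp add: split_block_def ul_block_def Let_def)
  have entry: "B $$ (0,0) * N1 $$ (i,j) + B $$ (0,1) * N3 $$ (i,j)
      + (B $$ (0,0) * cnj (N1 $$ (j,i)) + B $$ (1,0) * cnj (N3 $$ (j,i))) = 0"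
    if B: "B \<in> IHerm0 2" and "i < q" "j < q" for B i j
    using B anticomm[OF B] blocks N that by (intro kron_anticomm_upper_left) (auto simp: IHerm0_iff)
  (* \<sigma>_z makes N1 skew-Hermitian; \<sigma>_x and \<sigma>_y together force N3 = 0. *)
  have N1_skew: "cnj (N1 $$ (j,i)) = - N1 $$ (i,j)" if "i < q" "j < q" for i j
    using entry[OF pauli_IHerm0(3) that] by (simp add: pauli_z_def add_eq_0_iff)
  have "N3 $$ (i,j) = 0" if "i < q" "j < q" for i j
  proof -
    have "N3 $$ (i,j) + cnj (N3 $$ (j,i)) = 0" "- \<i> * N3 $$ (i,j) + \<i> * cnj (N3 $$ (j,i)) = 0"
      using entry[OF pauli_IHerm0(1) that] entry[OF pauli_IHerm0(2) that]
      by (simp_all add: pauli_x_def pauli_y_def)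
    then show ?thesis
      by (simp add: algebra_simps add_eq_0_iff)
  qed
  then have "N3 = 0\<^sub>m q q"
    by (intro eq_matI) (use blocks in simp_all)
  moreover have "adj N1 * N1 \<in> carrier_mat q q"
    using blocks by (metis adj_carrier_mat mult_carrier_mat)
  ultimately have "adj N1 * N1 = 1\<^sub>m q"
    using Unit_upper_left[of N1 q N2 N3 N4] blocks N by simp
  moreover have "adj N1 = - N1"
    by (rule eq_matI) (use N1_skew blocks in simp_all)
  ultimately show "adj (ul_block q N) = - ul_block q N" "ul_block q N \<in> Unit q"
    unfolding N1[symmetric] using blocks(1) by (simp_all add: Unit_def)
qed

section \<open>The compressed map\<close>

(* The hypotheses of the theorem, with 2(k - 1) written as 2 + (m + m). *)

locale kron_on_corner =
  fixes m q :: nat and \<phi> :: "complex mat \<Rightarrow> complex mat" and U V :: "complex mat"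
  assumes phi_carrier: "X \<in> Herm0 (2+(m+m)+2) \<Longrightarrow> \<phi> X \<in> carrier_mat (2*q) (2*q)"
    and phi_real_linear: "real_linear_on (Herm0 (2+(m+m)+2)) \<phi>"
    and phi_IHerm0: "X \<in> IHerm0 (2+(m+m)+2) \<Longrightarrow> \<phi> X \<in> Unit (2*q)"
    and U: "U \<in> Unit (2*q)" and V: "V \<in> Unit (2*q)"
    and phi_dsum: "A \<in> Herm0 (2+(m+m)) \<Longrightarrow> B \<in> Herm0 2 \<Longrightarrow> \<phi> (dsum A B) = U * kron B (1\<^sub>m q) * V"
begin

definition untwisted :: "complex mat \<Rightarrow> complex mat" where
  "untwisted W = adj U * \<phi> (herm_dilation (W * embed2 m)) * adj V"

definition psi :: "complex mat \<Rightarrow> complex mat" where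
  "psi W = herm_part (\<i> \<cdot>\<^sub>m ul_block q (untwisted W))"

lemma dilation_Herm0: "W \<in> carrier_mat (2+(m+m)) (2+(m+m)) \<Longrightarrow> herm_dilation (W * embed2 m) \<in> Herm0 (2+(m+m)+2)"
  by (metis embed2_carrier herm_dilation_Herm0 mult_carrier_mat)

lemma dilation_real_linear:
  assumes X: "X \<in> carrier_mat (2+(m+m)) (2+(m+m))" and Z: "Z \<in> carrier_mat (2+(m+m)) (2+(m+m))"
  shows "herm_dilation ((complex_of_real a \<cdot>\<^sub>m X + complex_of_real b \<cdot>\<^sub>m Z) * embed2 m)
    = complex_of_real a \<cdot>\<^sub>m herm_dilation (X * embed2 m) + complex_of_real b \<cdot>\<^sub>m herm_dilation (Z * embed2 m)"
proof -
  let ?a = "complex_of_real a" and ?b = "complex_of_real b" and ?E = "embed2 m"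
  have "(?a \<cdot>\<^sub>m X + ?b \<cdot>\<^sub>m Z) * ?E = ?a \<cdot>\<^sub>m (X * ?E) + ?b \<cdot>\<^sub>m (Z * ?E)"
    using X Z add_mult_distrib_mat[of "?a \<cdot>\<^sub>m X" "2+(m+m)" "2+(m+m)" "?b \<cdot>\<^sub>m Z" ?E 2]
      mult_smult_assoc_mat[OF X embed2_carrier] mult_smult_assoc_mat[OF Z embed2_carrier] embed2_carrier[of m]
    by simp
  moreover have "X * ?E \<in> carrier_mat (2+(m+m)) 2" "Z * ?E \<in> carrier_mat (2+(m+m)) 2"
    using X Z by (metis embed2_carrier mult_carrier_mat)+
  ultimately show ?thesis
    by (simp add: herm_dilation_real_linear)
qed

lemma untwisted_carrier:
  assumes "W \<in> carrier_mat (2+(m+m)) (2+(m+m))"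
  shows "untwisted W \<in> carrier_mat (2*q) (2*q)"
  unfolding untwisted_def
  using phi_carrier[OF dilation_Herm0[OF assms]] Unit_carrier[OF U] Unit_carrier[OF V]
  by (metis adj_carrier_mat mult_carrier_mat)

lemma untwisted_real_linear:
  assumes X: "X \<in> carrier_mat (2+(m+m)) (2+(m+m))" and Z: "Z \<in> carrier_mat (2+(m+m)) (2+(m+m))"
  shows "untwisted (complex_of_real a \<cdot>\<^sub>m X + complex_of_real b \<cdot>\<^sub>m Z)
    = complex_of_real a \<cdot>\<^sub>m untwisted X + complex_of_real b \<cdot>\<^sub>m untwisted Z"
proof -
  have "\<phi> (herm_dilation ((complex_of_real a \<cdot>\<^sub>m X + complex_of_real b \<cdot>\<^sub>m Z) * embed2 m))
      = complex_of_real a \<cdot>\<^sub>m \<phi> (herm_dilation (X * embed2 m))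
        + complex_of_real b \<cdot>\<^sub>m \<phi> (herm_dilation (Z * embed2 m))"
    using phi_real_linear dilation_Herm0[OF X] dilation_Herm0[OF Z]
    unfolding dilation_real_linear[OF X Z] real_linear_on_def by blast
  then show ?thesis
    unfolding untwisted_def
    using sandwich_real_linear[OF adj_carrier_mat[OF Unit_carrier[OF U]]
        phi_carrier[OF dilation_Herm0[OF X]] phi_carrier[OF dilation_Herm0[OF Z]]
        adj_carrier_mat[OF Unit_carrier[OF V]]]
    by simp
qed

lemma psi_Herm: "psi W \<in> Herm q"
  unfolding psi_def by (rule herm_part_Herm) (simp add: ul_block_def)

lemma psi_real_linear: "real_linear_on (carrier_mat (2+(m+m)) (2+(m+m))) psi"
  unfolding real_linear_on_def
proof (intro ballI allI)
  fix X Z :: "complex mat" and a b :: real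
  assume X: "X \<in> carrier_mat (2+(m+m)) (2+(m+m))" and Z: "Z \<in> carrier_mat (2+(m+m)) (2+(m+m))"
  let ?a = "complex_of_real a" and ?b = "complex_of_real b"
  have "\<i> \<cdot>\<^sub>m ul_block q (untwisted (?a \<cdot>\<^sub>m X + ?b \<cdot>\<^sub>m Z))
      = ?a \<cdot>\<^sub>m (\<i> \<cdot>\<^sub>m ul_block q (untwisted X)) + ?b \<cdot>\<^sub>m (\<i> \<cdot>\<^sub>m ul_block q (untwisted Z))"
    unfolding untwisted_real_linear[OF X Z]
    by (rule eq_matI) (use untwisted_carrier[OF X] untwisted_carrier[OF Z] in \<open>auto simp: ul_block_def algebra_simps\<close>)
  then show "psi (?a \<cdot>\<^sub>m X + ?b \<cdot>\<^sub>m Z) = ?a \<cdot>\<^sub>m psi X + ?b \<cdot>\<^sub>m psi Z"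
    unfolding psi_def by (simp add: herm_part_real_linear[of _ q] ul_block_def)
qed

lemma phi_conj_corner_reflection:
  assumes W: "W \<in> Unit (2+(m+m))"
  shows "\<phi> (dsum W (1\<^sub>m 2) * corner_reflection m * adj (dsum W (1\<^sub>m 2)))
    = \<phi> (herm_dilation (W * embed2 m))"
proof -
  let ?n = "2+(m+m)" and ?D = "compl_reflection m" and ?E = "embed2 m"
  have Wc: "W \<in> carrier_mat ?n ?n"
    using W by (rule Unit_carrier)
  have WDW: "W * ?D * adj W \<in> Herm0 ?n"
    by (rule Herm0_conj_Unit[OF W compl_reflection_Herm0])
  have zero: "0\<^sub>m 2 2 \<in> Herm0 2"
    by (simp add: Herm0_iff)
  have "dsum W (1\<^sub>m 2) * corner_reflection m * adj (dsum W (1\<^sub>m 2))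
      = four_block_mat (W * ?D * adj W) (W * ?E) (adj ?E * adj W) (0\<^sub>m 2 2)"
    unfolding corner_reflection_def
    by (rule dsum_one_conj_four_block[OF Wc compl_reflection_carrier embed2_carrier
          adj_carrier_mat[OF embed2_carrier] zero_carrier_mat])
  also have "\<dots> = dsum (W * ?D * adj W) (0\<^sub>m 2 2) + herm_dilation (W * ?E)"
    using four_block_eq_dsum_add_herm_dilation[of "W * ?D * adj W" ?n "W * ?E" 2]
      adj_mult[OF Wc embed2_carrier] WDW mult_carrier_mat[OF Wc embed2_carrier]
    by (simp add: Herm0_iff)
  finally have "\<phi> (dsum W (1\<^sub>m 2) * corner_reflection m * adj (dsum W (1\<^sub>m 2)))
      = \<phi> (dsum (W * ?D * adj W) (0\<^sub>m 2 2)) + \<phi> (herm_dilation (W * ?E))"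
    using real_linear_on_add[OF phi_real_linear dsum_Herm0[OF WDW zero] dilation_Herm0[OF Wc]] by simp
  also have "\<phi> (dsum (W * ?D * adj W) (0\<^sub>m 2 2)) = 0\<^sub>m (2*q) (2*q)"
    using phi_dsum[OF WDW zero] carrier_matD[OF Unit_carrier[OF U]] carrier_matD[OF Unit_carrier[OF V]]
    by simp
  finally show ?thesis
    using phi_carrier[OF dilation_Herm0[OF Wc]] by simp
qed

lemma phi_dilation_Unit:
  assumes W: "W \<in> Unit (2+(m+m))"
  shows "\<phi> (herm_dilation (W * embed2 m)) \<in> Unit (2*q)"
  using phi_IHerm0[OF IHerm0_conj_Unit[OF dsum_Unit[OF W one_Unit] corner_reflection_IHerm0]]
  unfolding phi_conj_corner_reflection[OF W] .

lemma phi_conj_partner: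
  assumes W: "W \<in> Unit (2+(m+m))" and B: "B \<in> IHerm0 2"
  shows "\<phi> (dsum W (1\<^sub>m 2) * dsum (partner m B) B * adj (dsum W (1\<^sub>m 2))) = U * kron B (1\<^sub>m q) * V"
proof -
  have "dsum W (1\<^sub>m 2) * dsum (partner m B) B * adj (dsum W (1\<^sub>m 2)) = dsum (W * partner m B * adj W) B"
    using dsum_conj[OF Unit_carrier[OF W] _ one_carrier_mat, of "partner m B" B] partner_IHerm0[OF B] B
    by (simp add: IHerm0_iff carrier_matD)
  moreover have "W * partner m B * adj W \<in> Herm0 (2+(m+m))" "B \<in> Herm0 2"
    using Herm0_conj_Unit[OF W] partner_IHerm0[OF B] B by (simp_all add: Herm0_iff IHerm0_iff)
  ultimately show ?thesis
    by (simp add: phi_dsum)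
qed

lemma untwisted_anticomm_kron:
  assumes W: "W \<in> Unit (2+(m+m))" and B: "B \<in> IHerm0 2"
  shows "kron B (1\<^sub>m q) * untwisted W + adj (untwisted W) * kron B (1\<^sub>m q) = 0\<^sub>m (2*q) (2*q)"
proof -
  let ?n = "2+(m+m)" and ?G = "dsum W (1\<^sub>m 2)" and ?c = "complex_of_real (1 / sqrt 2)"
  let ?X = "?G * corner_reflection m * adj ?G" and ?H = "?G * dsum (partner m B) B * adj ?G"
  let ?P = "U * kron B (1\<^sub>m q) * V" and ?M = "\<phi> (herm_dilation (W * embed2 m))"
  have G: "?G \<in> Unit (?n + 2)"
    by (rule dsum_Unit[OF W one_Unit])
  have X: "?X \<in> IHerm0 (?n + 2)"
    by (rule IHerm0_conj_Unit[OF G corner_reflection_IHerm0])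
  have AB: "dsum (partner m B) B \<in> IHerm0 (?n + 2)"
    by (rule dsum_IHerm0[OF partner_IHerm0[OF B] B])
  have H: "?H \<in> IHerm0 (?n + 2)"
    by (rule IHerm0_conj_Unit[OF G AB])
  have "?H * ?X + ?X * ?H = 0\<^sub>m (?n + 2) (?n + 2)"
    using AB corner_reflection_IHerm0[of m] partner_corner_reflection_anticomm[OF B] G
    by (intro anticomm_conj) (simp_all add: IHerm0_iff)
  then have mid: "?c \<cdot>\<^sub>m ?H + ?c \<cdot>\<^sub>m ?X \<in> IHerm0 (?n + 2)"
    by (rule anticomm_IHerm0_midpoint[OF H X])
  have "?H \<in> Herm0 (?n + 2)" "?X \<in> Herm0 (?n + 2)"
    using H X by (simp_all add: IHerm0_def)
  then have "\<phi> (?c \<cdot>\<^sub>m ?H + ?c \<cdot>\<^sub>m ?X) = ?c \<cdot>\<^sub>m \<phi> ?H + ?c \<cdot>\<^sub>m \<phi> ?X"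
    using phi_real_linear unfolding real_linear_on_def by blast
  then have "?c \<cdot>\<^sub>m ?P + ?c \<cdot>\<^sub>m ?M \<in> Unit (2*q)"
    using phi_IHerm0[OF mid] phi_conj_partner[OF W B] phi_conj_corner_reflection[OF W] by simp
  then have "adj ?P * ?M + adj ?M * ?P = 0\<^sub>m (2*q) (2*q)"
    using phi_IHerm0[OF H] phi_conj_partner[OF W B] phi_dilation_Unit[OF W]
    by (intro Unit_midpoint_imp_anticomm) simp_all
  then show ?thesis
    unfolding untwisted_def
    using U V B phi_dilation_Unit[OF W] adj_kron_one[of B q]
    by (intro anticomm_untwist) (simp_all add: IHerm0_def Herm0_def Unit_carrier)
qed

lemma psi_Unit:
  assumes W: "W \<in> Unit (2+(m+m))"
  shows "psi W \<in> Herm q \<inter> Unit q"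
proof -
  have "untwisted W \<in> Unit (2*q)"
    unfolding untwisted_def using U V phi_dilation_Unit[OF W] by (intro Unit_mult Unit_adj)
  then have "adj (ul_block q (untwisted W)) = - ul_block q (untwisted W)"
    "ul_block q (untwisted W) \<in> Unit q"
    using untwisted_anticomm_kron[OF W] by (intro kron_anticomm_ul_block; simp add: Unit_def mult_2)+
  then have "\<i> \<cdot>\<^sub>m ul_block q (untwisted W) \<in> Herm q \<inter> Unit q"
    by (rule i_smult_skew_Unit)
  then show ?thesis
    unfolding psi_def using herm_part_of_Herm by auto
qed

end

theorem lemma3p10:
  fixes k q :: nat and \<phi> :: "complex mat \<Rightarrow> complex mat"
  assumes "k \<ge> 2"
    and "\<forall>X\<in>Herm0 (2*k). \<phi> X \<in> Mn (2*q)"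
    and "real_linear_on (Herm0 (2*k)) \<phi>"
    and "\<phi> ` IHerm0 (2*k) \<subseteq> Unit (2*q)"
    and "\<exists>U\<in>Unit (2*q). \<exists>V\<in>Unit (2*q). \<forall>A\<in>Herm0 (2*(k-1)). \<forall>B\<in>Herm0 2.
           \<phi> (dsum A B) = U * kron B (1\<^sub>m q) * V"
  shows "\<exists>\<psi> :: complex mat \<Rightarrow> complex mat.
           (\<forall>X\<in>Mn (2*(k-1)). \<psi> X \<in> Herm q) \<and>
           real_linear_on (Mn (2*(k-1))) \<psi> \<and>
           \<psi> ` Unit (2*(k-1)) \<subseteq> Herm q \<inter> Unit q"
proof -
  define m where "m = k - 2"
  have dim: "2*(k-1) = 2+(m+m)" and dim_ext: "2*k = 2+(m+m)+2"
    using assms(1) by (simp_all add: m_def)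
  obtain U V where "U \<in> Unit (2*q)" "V \<in> Unit (2*q)"
    and "\<forall>A\<in>Herm0 (2+(m+m)). \<forall>B\<in>Herm0 2. \<phi> (dsum A B) = U * kron B (1\<^sub>m q) * V"
    using assms(5) unfolding dim by blast
  then interpret kron_on_corner m q \<phi> U V
    using assms(2-4) unfolding dim_ext by unfold_locales auto
  show ?thesis
    unfolding dim using psi_Herm psi_real_linear psi_Unit by blast
qed

end
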